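(* Let $G$ be a finite perfect group (i.e. $G=[G,G]$) and let $I$ be any set. Then the unrestricted direct product $G^I$, viewed as a discrete group, is strongly bounded.
   Context: A group $\Gamma$ is called strongly bounded if for every action of $\Gamma$ by isometries on a metric space, every orbit is bounded. *)

theory Defs
  imports "HOL-Analysis.Analysis" "HOL-Algebra.Product_Groups" "HOL-Algebra.Solvable_Groups"
begin

definition perfect_group :: "('a, 'b) monoid_scheme \<Rightarrow> bool" where
  "perfect_group G \<longleftrightarrow> group G \<and> derived G (carrier G) = carrier G"

definition isometric_action ::
  "('g, 'b) monoid_scheme \<Rightarrow> 'm set \<Rightarrow> ('m \<Rightarrow> 'm \<Rightarrow> real) \<Rightarrow> ('g \<Rightarrow> 'm \<Rightarrow> 'm) \<Rightarrow> bool" where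
  "isometric_action \<Gamma> M d \<phi> \<longleftrightarrow>
     Metric_space M d \<and>
     (\<forall>g\<in>carrier \<Gamma>. \<forall>x\<in>M. \<phi> g x \<in> M) \<and>
     (\<forall>g\<in>carrier \<Gamma>. \<forall>x\<in>M. \<forall>y\<in>M. d (\<phi> g x) (\<phi> g y) = d x y) \<and>
     (\<forall>x\<in>M. \<phi> \<one>\<^bsub>\<Gamma>\<^esub> x = x) \<and>
     (\<forall>g\<in>carrier \<Gamma>. \<forall>h\<in>carrier \<Gamma>. \<forall>x\<in>M. \<phi> (g \<otimes>\<^bsub>\<Gamma>\<^esub> h) x = \<phi> g (\<phi> h x))"

text \<open>The type 'm is an explicit parameter;
  universally quantifying it at theorem level covers all metric spaces.\<close>
definition strongly_bounded :: "'m itself \<Rightarrow> ('g, 'b) monoid_scheme \<Rightarrow> bool" where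
  "strongly_bounded (TYPE('m)) \<Gamma> \<longleftrightarrow>
     (\<forall>(M :: 'm set) d \<phi>. isometric_action \<Gamma> M d \<phi> \<longrightarrow>
        (\<forall>x\<in>M. Metric_space.mbounded M d ((\<lambda>g. \<phi> g x) ` carrier \<Gamma>)))"

end

theory Submission
  imports Defs
begin

(* An isometric action with base point x gives the length function g \<mapsto> d(g x, x), so it suffices
   to show that every length function len on G^I is bounded. For a \<in> G and X \<subseteq> I let a_X be the
   element equal to a on X and 1 elsewhere, and put f X = \<Sum>_a len(a_X). Then f is subadditive on
   disjoint unions, f Z \<le> |G| (f R + f (R - Z)) for Z \<subseteq> R, and, since G is perfect and
   [a,b]_(X \<inter> Y) = [a_X, b_Y], f (X \<inter> Y) \<le> K (f X + f Y). If f were unbounded, splitting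
   repeatedly would give disjoint sets B_0, B_1, ... on each of which f is unbounded; choosing
   Z_j \<subseteq> B_j with f Z_j > K (f B_j + j), the set Z = \<Union>_j Z_j satisfies Z \<inter> B_j = Z_j, which
   forces f Z > j for every j. So f is bounded, and then so is len, because every g is the
   product of the elements a_{g^-1(a)}. *)

definition length_function :: "('g, 'b) monoid_scheme \<Rightarrow> ('g \<Rightarrow> real) \<Rightarrow> bool" where
  "length_function \<Gamma> len \<longleftrightarrow>
     len \<one>\<^bsub>\<Gamma>\<^esub> = 0 \<and> (\<forall>g\<in>carrier \<Gamma>. 0 \<le> len g) \<and>
     (\<forall>g\<in>carrier \<Gamma>. \<forall>h\<in>carrier \<Gamma>. len (g \<otimes>\<^bsub>\<Gamma>\<^esub> h) \<le> len g + len h)"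

lemma length_function_orbit:
  assumes act: "isometric_action \<Gamma> M d \<phi>" and x: "x \<in> M"
  shows "length_function \<Gamma> (\<lambda>g. d (\<phi> g x) x)"
proof -
  interpret Metric_space M d
    using act by (simp add: isometric_action_def)
  have "d (\<phi> (g \<otimes>\<^bsub>\<Gamma>\<^esub> h) x) x \<le> d (\<phi> g x) x + d (\<phi> h x) x"
    if g: "g \<in> carrier \<Gamma>" and h: "h \<in> carrier \<Gamma>" for g h
  proof -
    have in_M: "\<phi> g x \<in> M" "\<phi> h x \<in> M" "\<phi> g (\<phi> h x) \<in> M"
      using act g h x by (auto simp: isometric_action_def)
    have "d (\<phi> (g \<otimes>\<^bsub>\<Gamma>\<^esub> h) x) x = d (\<phi> g (\<phi> h x)) x"
      using act g h x by (simp add: isometric_action_def)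
    also have "\<dots> \<le> d (\<phi> g (\<phi> h x)) (\<phi> g x) + d (\<phi> g x) x"
      using in_M x by (intro triangle)
    also have "d (\<phi> g (\<phi> h x)) (\<phi> g x) = d (\<phi> h x) x"
      using act g in_M x by (simp add: isometric_action_def)
    finally show ?thesis by linarith
  qed
  then show ?thesis
    using act x by (simp add: length_function_def isometric_action_def)
qed

lemma strongly_boundedI_length_function:
  assumes "\<And>len. length_function \<Gamma> len \<Longrightarrow> \<exists>B. \<forall>g\<in>carrier \<Gamma>. len g \<le> B"
  shows "strongly_bounded TYPE('m) \<Gamma>"
  unfolding strongly_bounded_def
proof (intro allI impI ballI)
  fix M :: "'m set" and d \<phi> x
  assume act: "isometric_action \<Gamma> M d \<phi>" and x: "x \<in> M"
  interpret Metric_space M d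
    using act by (simp add: isometric_action_def)
  obtain B where B: "\<And>g. g \<in> carrier \<Gamma> \<Longrightarrow> d (\<phi> g x) x \<le> B"
    using assms[OF length_function_orbit[OF act x]] by blast
  have "(\<lambda>g. \<phi> g x) ` carrier \<Gamma> \<subseteq> mcball x B"
    using act x B by (auto simp: isometric_action_def commute)
  then show "mbounded ((\<lambda>g. \<phi> g x) ` carrier \<Gamma>)"
    unfolding mbounded_def by blast
qed

locale coarse_submeasure =
  fixes f :: "'i set \<Rightarrow> real" and C K :: real
  assumes nonneg: "0 \<le> f X"
    and Un_le: "A \<inter> B = {} \<Longrightarrow> f (A \<union> B) \<le> f A + f B"
    and subset_le: "Z \<subseteq> R \<Longrightarrow> f Z \<le> C * (f R + f (R - Z))"
    and Int_le: "f (X \<inter> Y) \<le> K * (f X + f Y)"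
    and C_nonneg: "0 \<le> C" and K_nonneg: "0 \<le> K"
begin

definition bounded_on :: "'i set \<Rightarrow> bool" where
  "bounded_on X \<longleftrightarrow> (\<exists>N. \<forall>Y\<subseteq>X. f Y \<le> N)"

lemma bounded_on_Un:
  assumes "bounded_on A" "bounded_on B"
  shows "bounded_on (A \<union> B)"
proof -
  obtain N1 N2 where N1: "\<And>Y. Y \<subseteq> A \<Longrightarrow> f Y \<le> N1" and N2: "\<And>Y. Y \<subseteq> B \<Longrightarrow> f Y \<le> N2"
    using assms by (auto simp: bounded_on_def)
  have "f Y \<le> N1 + N2" if "Y \<subseteq> A \<union> B" for Y
  proof -
    have "f Y = f ((Y \<inter> A) \<union> (Y - A))"
      by (simp add: Int_Diff_Un)
    also have "\<dots> \<le> f (Y \<inter> A) + f (Y - A)"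
      by (rule Un_le) blast
    also have "\<dots> \<le> N1 + N2"
      using that by (intro add_mono N1 N2) auto
    finally show ?thesis .
  qed
  then show ?thesis
    unfolding bounded_on_def by blast
qed

lemma unbounded_on_split:
  assumes "\<not> bounded_on R"
  shows "\<exists>R'\<subseteq>R. \<not> bounded_on R' \<and> real n \<le> f (R - R')"
proof -
  obtain Z where Z: "Z \<subseteq> R" "(C + 1) * (f R + n) < f Z"
    using assms unfolding bounded_on_def by (meson not_le)
  show ?thesis
  proof (cases "bounded_on (R - Z)")
    case True
    have "Z \<union> (R - Z) = R"
      using Z(1) by blast
    then have "\<not> bounded_on Z"
      using assms True bounded_on_Un by metis
    have "f Z \<le> C * (f R + f (R - Z))"
      using Z(1) by (rule subset_le)
    also have "\<dots> \<le> (C + 1) * (f R + f (R - Z))"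
      using nonneg[of R] nonneg[of "R - Z"] by (intro mult_right_mono) auto
    finally have "(C + 1) * (f R + n) < (C + 1) * (f R + f (R - Z))"
      using Z(2) by linarith
    then have "real n \<le> f (R - Z)"
      using C_nonneg by simp
    with \<open>\<not> bounded_on Z\<close> Z(1) show ?thesis
      by blast
  next
    case False
    have "real n \<le> 1 * (f R + n)"
      using nonneg[of R] by simp
    also have "\<dots> \<le> (C + 1) * (f R + n)"
      using C_nonneg nonneg[of R] by (intro mult_right_mono) auto
    finally have "real n \<le> (C + 1) * (f R + n)" .
    then have "real n \<le> f (R - (R - Z))"
      using Z by (simp add: Diff_Diff_Int Int_absorb1)
    with False show ?thesis
      by blast
  qed
qed

lemma unbounded_on_disjoint_sequence:
  assumes "\<not> bounded_on R"
  shows "\<exists>W. disjoint_family W \<and> (\<forall>n. real n \<le> f (W n))"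
proof -
  have "\<exists>S. \<forall>n. \<not> bounded_on (S n) \<and> S (Suc n) \<subseteq> S n \<and> real n \<le> f (S n - S (Suc n))"
    by (rule dependent_nat_choice) (use assms unbounded_on_split in blast)+
  then obtain S where S: "\<And>n. S (Suc n) \<subseteq> S n" "\<And>n. real n \<le> f (S n - S (Suc n))"
    by blast
  have "decseq S"
    using S(1) by (rule decseq_SucI)
  define W where "W n = S n - S (Suc n)" for n
  have "W m \<inter> W n = {}" if "m < n" for m n
    using decseqD[OF \<open>decseq S\<close>, of "Suc m" n] that by (auto simp: W_def)
  then have "disjoint_family W"
    unfolding disjoint_family_on_def by (metis Int_commute nat_neq_iff)
  with S(2) show ?thesis
    unfolding W_def by blast
qed

lemma unbounded_on_disjoint_family:
  assumes "\<not> bounded_on R"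
  shows "\<exists>B :: nat \<Rightarrow> 'i set. disjoint_family B \<and> (\<forall>j. \<not> bounded_on (B j))"
proof -
  obtain W where W: "disjoint_family W" "\<And>n. real n \<le> f (W n)"
    using unbounded_on_disjoint_sequence[OF assms] by blast
  define B where "B j = (\<Union>k. W (prod_encode (j, k)))" for j
  have "B j \<inter> B j' = {}" if "j \<noteq> j'" for j j'
  proof -
    have "W (prod_encode (j, k)) \<inter> W (prod_encode (j', k')) = {}" for k k'
      using W(1) that unfolding disjoint_family_on_def by (simp add: prod_encode_eq)
    then show ?thesis
      unfolding B_def by blast
  qed
  then have "disjoint_family B"
    unfolding disjoint_family_on_def by blast
  moreover have "\<not> bounded_on (B j)" for j
  proof
    assume "bounded_on (B j)"
    then obtain N where N: "\<And>Y. Y \<subseteq> B j \<Longrightarrow> f Y \<le> N"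
      unfolding bounded_on_def by blast
    obtain k where k: "N < real k"
      using reals_Archimedean2 by blast
    have "real k \<le> f (W (prod_encode (j, k)))"
      using W(2) le_prod_encode_2 by (meson of_nat_le_iff order_trans)
    moreover have "f (W (prod_encode (j, k))) \<le> N"
      by (rule N) (auto simp: B_def)
    ultimately show False
      using k by linarith
  qed
  ultimately show ?thesis
    by blast
qed

lemma not_disjoint_unbounded_family:
  fixes B :: "nat \<Rightarrow> 'i set"
  assumes B: "disjoint_family B" and unbounded: "\<And>j. \<not> bounded_on (B j)"
  shows False
proof -
  have "\<forall>j. \<exists>Z. Z \<subseteq> B j \<and> K * (f (B j) + real j) < f Z"
    using unbounded unfolding bounded_on_def by (meson not_le)
  then obtain Z where Z: "\<And>j. Z j \<subseteq> B j" "\<And>j. K * (f (B j) + real j) < f (Z j)"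
    by (metis choice)
  define U where "U = (\<Union>j. Z j)"
  have U_Int: "U \<inter> B j = Z j" for j
  proof
    show "U \<inter> B j \<subseteq> Z j"
    proof
      fix i assume "i \<in> U \<inter> B j"
      then obtain j' where i: "i \<in> Z j'" "i \<in> B j"
        unfolding U_def by blast
      moreover have "i \<in> B j'"
        using Z(1) i(1) by blast
      ultimately have "j' = j"
        using disjoint_family_onD[OF B] by blast
      with i show "i \<in> Z j"
        by simp
    qed
  qed (use Z(1) U_def in blast)
  have "real j < f U" for j
  proof -
    have "K * (f (B j) + real j) < K * (f U + f (B j))"
      using Z(2)[of j] Int_le[of U "B j"] by (simp add: U_Int)
    then have "f (B j) + real j < f U + f (B j)"
      using K_nonneg by (rule mult_left_less_imp_less)
    then show ?thesis
      by linarith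
  qed
  moreover obtain n where "f U < real n"
    using reals_Archimedean2 by blast
  ultimately show False
    by (meson less_asym)
qed

theorem bounded: "\<exists>N. \<forall>X. f X \<le> N"
proof -
  have "bounded_on UNIV"
    using unbounded_on_disjoint_family not_disjoint_unbounded_family by blast
  then show ?thesis
    by (simp add: bounded_on_def)
qed

end

locale length_function_on_power =
  fixes G :: "('a, 'b) monoid_scheme" and I :: "'i set" and len :: "('i \<Rightarrow> 'a) \<Rightarrow> real"
  assumes group: "group G"
    and finite_carrier: "finite (carrier G)"
    and length: "length_function (product_group I (\<lambda>_. G)) len"
begin

interpretation G: group G
  by (rule group)

(* Keep the operations of P folded, so that the length axioms apply to products syntactically. *)
declare one_product_group [simp del] mult_product_group [simp del]

abbreviation P where "P \<equiv> product_group I (\<lambda>_. G)"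

lemma length_one: "len \<one>\<^bsub>P\<^esub> = 0"
  and length_nonneg: "g \<in> carrier P \<Longrightarrow> 0 \<le> len g"
  and length_mult: "g \<in> carrier P \<Longrightarrow> h \<in> carrier P \<Longrightarrow> len (g \<otimes>\<^bsub>P\<^esub> h) \<le> len g + len h"
  using length by (simp_all add: length_function_def)

definition const_on :: "'a \<Rightarrow> 'i set \<Rightarrow> 'i \<Rightarrow> 'a" where
  "const_on a X = (\<lambda>i\<in>I. if i \<in> X then a else \<one>\<^bsub>G\<^esub>)"

definition total_length :: "'i set \<Rightarrow> real" where
  "total_length X = (\<Sum>a\<in>carrier G. len (const_on a X))"

lemma const_on_closed: "a \<in> carrier G \<Longrightarrow> const_on a X \<in> carrier P"
  by (auto simp: const_on_def)

lemma const_on_one: "const_on \<one>\<^bsub>G\<^esub> X = \<one>\<^bsub>P\<^esub>"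
  by (auto simp: const_on_def one_product_group)

lemma const_on_mult: "const_on (a \<otimes>\<^bsub>G\<^esub> b) X = const_on a X \<otimes>\<^bsub>P\<^esub> const_on b X"
  if "a \<in> carrier G" "b \<in> carrier G"
  using that unfolding const_on_def mult_product_group by (intro restrict_ext) auto

lemma const_on_Un: "const_on a (A \<union> B) = const_on a A \<otimes>\<^bsub>P\<^esub> const_on a B"
  if "A \<inter> B = {}" "a \<in> carrier G"
  using that unfolding const_on_def mult_product_group by (intro restrict_ext) auto

lemma const_on_subset: "const_on a Z = const_on a R \<otimes>\<^bsub>P\<^esub> const_on (inv\<^bsub>G\<^esub> a) (R - Z)"
  if "Z \<subseteq> R" "a \<in> carrier G"
  using that unfolding const_on_def mult_product_group by (intro restrict_ext) auto

lemma const_on_commutator: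
  "const_on (a \<otimes>\<^bsub>G\<^esub> b \<otimes>\<^bsub>G\<^esub> inv\<^bsub>G\<^esub> a \<otimes>\<^bsub>G\<^esub> inv\<^bsub>G\<^esub> b) (X \<inter> Y)
     = const_on a X \<otimes>\<^bsub>P\<^esub> const_on b Y \<otimes>\<^bsub>P\<^esub> const_on (inv\<^bsub>G\<^esub> a) X \<otimes>\<^bsub>P\<^esub> const_on (inv\<^bsub>G\<^esub> b) Y"
  if "a \<in> carrier G" "b \<in> carrier G"
  using that unfolding const_on_def mult_product_group by (intro restrict_ext) (auto simp: G.m_assoc)

lemma length_const_on_le: "a \<in> carrier G \<Longrightarrow> len (const_on a X) \<le> total_length X"
  unfolding total_length_def
  by (rule member_le_sum) (auto intro: length_nonneg const_on_closed simp: finite_carrier)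

lemma total_length_nonneg: "0 \<le> total_length X"
  unfolding total_length_def by (intro sum_nonneg length_nonneg const_on_closed)

lemma total_length_Un:
  assumes "A \<inter> B = {}"
  shows "total_length (A \<union> B) \<le> total_length A + total_length B"
  unfolding total_length_def sum.distrib[symmetric]
proof (rule sum_mono)
  fix a assume a: "a \<in> carrier G"
  show "len (const_on a (A \<union> B)) \<le> len (const_on a A) + len (const_on a B)"
    unfolding const_on_Un[OF assms a] using a by (intro length_mult const_on_closed)
qed

lemma total_length_subset:
  assumes "Z \<subseteq> R"
  shows "total_length Z \<le> card (carrier G) * (total_length R + total_length (R - Z))"
proof -
  have "len (const_on a Z) \<le> total_length R + total_length (R - Z)" if a: "a \<in> carrier G" for a
  proof -
    have "len (const_on a Z) \<le> len (const_on a R) + len (const_on (inv\<^bsub>G\<^esub> a) (R - Z))"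
      unfolding const_on_subset[OF assms a] using a by (intro length_mult const_on_closed) auto
    also have "\<dots> \<le> total_length R + total_length (R - Z)"
      using a by (intro add_mono length_const_on_le) auto
    finally show ?thesis .
  qed
  then have "total_length Z \<le> (\<Sum>a\<in>carrier G. total_length R + total_length (R - Z))"
    unfolding total_length_def[of Z] by (rule sum_mono)
  then show ?thesis
    by simp
qed

lemma length_const_on_commutator:
  assumes a: "a \<in> carrier G" and b: "b \<in> carrier G"
  shows "len (const_on (a \<otimes>\<^bsub>G\<^esub> b \<otimes>\<^bsub>G\<^esub> inv\<^bsub>G\<^esub> a \<otimes>\<^bsub>G\<^esub> inv\<^bsub>G\<^esub> b) (X \<inter> Y))
           \<le> 2 * (total_length X + total_length Y)"
proof -
  interpret P: group P
    using group by simp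
  define u v u' v' where "u = const_on a X" and "v = const_on b Y"
    and "u' = const_on (inv\<^bsub>G\<^esub> a) X" and "v' = const_on (inv\<^bsub>G\<^esub> b) Y"
  have closed: "u \<in> carrier P" "v \<in> carrier P" "u' \<in> carrier P" "v' \<in> carrier P"
    using a b unfolding u_def v_def u'_def v'_def by (blast intro: const_on_closed G.inv_closed)+
  have "len (u \<otimes>\<^bsub>P\<^esub> v \<otimes>\<^bsub>P\<^esub> u' \<otimes>\<^bsub>P\<^esub> v') \<le> len (u \<otimes>\<^bsub>P\<^esub> v \<otimes>\<^bsub>P\<^esub> u') + len v'"
    using closed by (intro length_mult P.m_closed)
  also have "\<dots> \<le> len (u \<otimes>\<^bsub>P\<^esub> v) + len u' + len v'"
    using closed by (intro add_right_mono length_mult P.m_closed)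
  also have "\<dots> \<le> len u + len v + len u' + len v'"
    using closed by (intro add_right_mono length_mult)
  also have "\<dots> \<le> 2 * (total_length X + total_length Y)"
  proof -
    have "len u \<le> total_length X" "len u' \<le> total_length X"
      and "len v \<le> total_length Y" "len v' \<le> total_length Y"
      using a b unfolding u_def v_def u'_def v'_def by (simp_all add: length_const_on_le)
    then show ?thesis
      by argo
  qed
  finally show ?thesis
    using a b by (simp add: const_on_commutator u_def v_def u'_def v'_def)
qed

definition Int_bounded :: "'a \<Rightarrow> bool" where
  "Int_bounded h \<longleftrightarrow>
     (\<exists>N\<ge>0. \<forall>X Y. len (const_on h (X \<inter> Y)) \<le> N * (total_length X + total_length Y))"

lemma Int_bounded_one: "Int_bounded \<one>\<^bsub>G\<^esub>"
  unfolding Int_bounded_def by (auto simp: const_on_one length_one)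

lemma Int_bounded_commutator:
  assumes "a \<in> carrier G" "b \<in> carrier G"
  shows "Int_bounded (a \<otimes>\<^bsub>G\<^esub> b \<otimes>\<^bsub>G\<^esub> inv\<^bsub>G\<^esub> a \<otimes>\<^bsub>G\<^esub> inv\<^bsub>G\<^esub> b)"
proof -
  have "(0::real) \<le> 2"
    by simp
  with length_const_on_commutator[OF assms] show ?thesis
    unfolding Int_bounded_def by blast
qed

lemma Int_bounded_mult:
  assumes h1: "h1 \<in> carrier G" "Int_bounded h1" and h2: "h2 \<in> carrier G" "Int_bounded h2"
  shows "Int_bounded (h1 \<otimes>\<^bsub>G\<^esub> h2)"
proof -
  obtain N1 N2 where N: "N1 \<ge> 0" "N2 \<ge> 0"
    "\<And>X Y. len (const_on h1 (X \<inter> Y)) \<le> N1 * (total_length X + total_length Y)"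
    "\<And>X Y. len (const_on h2 (X \<inter> Y)) \<le> N2 * (total_length X + total_length Y)"
    using h1(2) h2(2) unfolding Int_bounded_def by blast
  have "len (const_on (h1 \<otimes>\<^bsub>G\<^esub> h2) (X \<inter> Y)) \<le> (N1 + N2) * (total_length X + total_length Y)"
    for X Y
  proof -
    have "len (const_on (h1 \<otimes>\<^bsub>G\<^esub> h2) (X \<inter> Y))
          \<le> len (const_on h1 (X \<inter> Y)) + len (const_on h2 (X \<inter> Y))"
      unfolding const_on_mult[OF h1(1) h2(1)] using h1(1) h2(1) by (intro length_mult const_on_closed)
    also have "\<dots> \<le> (N1 + N2) * (total_length X + total_length Y)"
      using N(3,4)[of X Y] by (simp add: distrib_right)
    finally show ?thesis .
  qed
  moreover have "0 \<le> N1 + N2"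
    using N(1,2) by simp
  ultimately show ?thesis
    unfolding Int_bounded_def by blast
qed

lemma Int_bounded_derived:
  assumes "h \<in> derived G (carrier G)"
  shows "Int_bounded h"
  using assms unfolding derived_def
proof (induction rule: generate.induct)
  case one
  then show ?case
    by (rule Int_bounded_one)
next
  case (incl h)
  then show ?case
    using Int_bounded_commutator by blast
next
  case (inv h)
  then obtain a b where ab: "a \<in> carrier G" "b \<in> carrier G"
    and h: "h = a \<otimes>\<^bsub>G\<^esub> b \<otimes>\<^bsub>G\<^esub> inv\<^bsub>G\<^esub> a \<otimes>\<^bsub>G\<^esub> inv\<^bsub>G\<^esub> b"
    by blast
  have "inv\<^bsub>G\<^esub> h = b \<otimes>\<^bsub>G\<^esub> a \<otimes>\<^bsub>G\<^esub> inv\<^bsub>G\<^esub> b \<otimes>\<^bsub>G\<^esub> inv\<^bsub>G\<^esub> a"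
    using ab by (simp add: h G.inv_mult_group G.m_assoc)
  then show ?case
    using Int_bounded_commutator[OF ab(2,1)] by simp
next
  case (eng h1 h2)
  have "h1 \<in> carrier G" "h2 \<in> carrier G"
    using G.generate_in_carrier[OF G.derived_set_in_carrier[OF subset_refl]] eng.hyps by blast+
  then show ?case
    using eng.IH by (intro Int_bounded_mult)
qed

lemma total_length_Int:
  assumes perfect: "derived G (carrier G) = carrier G"
  shows "\<exists>K\<ge>0. \<forall>X Y. total_length (X \<inter> Y) \<le> K * (total_length X + total_length Y)"
proof -
  have "\<forall>a\<in>carrier G. \<exists>N\<ge>0. \<forall>X Y. len (const_on a (X \<inter> Y)) \<le> N * (total_length X + total_length Y)"
    using Int_bounded_derived unfolding perfect Int_bounded_def by blast
  from bchoice[OF this] obtain N where "\<forall>a\<in>carrier G. N a \<ge> 0 \<and>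
      (\<forall>X Y. len (const_on a (X \<inter> Y)) \<le> N a * (total_length X + total_length Y))"
    by blast
  then have N: "\<And>a. a \<in> carrier G \<Longrightarrow> N a \<ge> 0"
    "\<And>a X Y. a \<in> carrier G \<Longrightarrow> len (const_on a (X \<inter> Y)) \<le> N a * (total_length X + total_length Y)"
    by blast+
  have "total_length (X \<inter> Y) \<le> (\<Sum>a\<in>carrier G. N a) * (total_length X + total_length Y)" for X Y
    unfolding total_length_def[of "X \<inter> Y"] sum_distrib_right by (intro sum_mono N(2))
  moreover have "0 \<le> (\<Sum>a\<in>carrier G. N a)"
    using N(1) by (rule sum_nonneg)
  ultimately show ?thesis
    by blast
qed

lemma length_restrict_values_le:
  assumes g: "g \<in> carrier P" and S: "finite S" "S \<subseteq> carrier G"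
  shows "len (\<lambda>i\<in>I. if g i \<in> S then g i else \<one>\<^bsub>G\<^esub>) \<le> (\<Sum>a\<in>S. len (const_on a {i. g i = a}))"
  using S
proof (induction S rule: finite_induct)
  case empty
  have "(\<lambda>i\<in>I. if g i \<in> {} then g i else \<one>\<^bsub>G\<^esub>) = \<one>\<^bsub>P\<^esub>"
    by (simp add: one_product_group)
  then show ?case
    using length_one by simp
next
  case (insert a S)
  let ?g = "\<lambda>S. \<lambda>i\<in>I. if g i \<in> S then g i else \<one>\<^bsub>G\<^esub>"
  have a: "a \<in> carrier G" and S: "S \<subseteq> carrier G"
    using insert.prems by auto
  have gS: "?g S \<in> carrier P"
    using g by auto
  have "?g (insert a S) = const_on a {i. g i = a} \<otimes>\<^bsub>P\<^esub> ?g S"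
    unfolding const_on_def mult_product_group
    by (rule restrict_ext) (use g a insert.hyps(2) in \<open>auto simp: PiE_iff\<close>)
  then have "len (?g (insert a S)) \<le> len (const_on a {i. g i = a}) + len (?g S)"
    using length_mult[OF const_on_closed[OF a] gS] by simp
  moreover have "len (?g S) \<le> (\<Sum>a\<in>S. len (const_on a {i. g i = a}))"
    using S by (rule insert.IH)
  ultimately show ?case
    unfolding sum.insert[OF insert.hyps] by linarith
qed

theorem length_bounded:
  assumes perfect: "derived G (carrier G) = carrier G"
  shows "\<exists>B. \<forall>g\<in>carrier P. len g \<le> B"
proof -
  obtain K where K: "K \<ge> 0" "\<And>X Y. total_length (X \<inter> Y) \<le> K * (total_length X + total_length Y)"
    using total_length_Int[OF perfect] by blast
  have "coarse_submeasure total_length (card (carrier G)) K"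
    using K by (intro coarse_submeasure.intro total_length_nonneg total_length_Un total_length_subset) auto
  then obtain N where N: "\<And>X. total_length X \<le> N"
    using coarse_submeasure.bounded by blast
  have "len g \<le> card (carrier G) * N" if g: "g \<in> carrier P" for g
  proof -
    have "(\<lambda>i\<in>I. if g i \<in> carrier G then g i else \<one>\<^bsub>G\<^esub>) = (\<lambda>i\<in>I. g i)"
      using g by (intro restrict_ext) auto
    then have "(\<lambda>i\<in>I. if g i \<in> carrier G then g i else \<one>\<^bsub>G\<^esub>) = g"
      using g by simp
    then have "len g \<le> (\<Sum>a\<in>carrier G. len (const_on a {i. g i = a}))"
      using length_restrict_values_le[OF g finite_carrier] by simp
    also have "\<dots> \<le> (\<Sum>a\<in>carrier G. N)"
      by (intro sum_mono order_trans[OF length_const_on_le N])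
    finally show ?thesis
      by simp
  qed
  then show ?thesis
    by blast
qed

end

theorem mainTheorem1:
  fixes G :: "('a, 'b) monoid_scheme" and I :: "'i set"
  assumes "group G" and "finite (carrier G)" and "perfect_group G"
  shows "strongly_bounded TYPE('m) (product_group I (\<lambda>_. G))"
proof (rule strongly_boundedI_length_function)
  fix len assume "length_function (product_group I (\<lambda>_. G)) len"
  with assms(1,2) interpret length_function_on_power G I len
    by (rule length_function_on_power.intro)
  show "\<exists>B. \<forall>g\<in>carrier (product_group I (\<lambda>_. G)). len g \<le> B"
    using length_bounded assms(3) by (simp add: perfect_group_def)
qed

end
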